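(* Let $d\geq 1$, let $p_1<p_2<\dots<p_d$ be the first $d$ prime numbers, let $N\geq 1$ be an integer, and let $C>1$ and $\sigma\in\mathbb{R}$. Let $\mathbf{A}_1$ be the $(d+1)\times(d+1)$ real matrix $$\mathbf{A}_1=\begin{bmatrix}\ln p_1 & & & 0\\ & \ddots & & \vdots\\ & & \ln p_d & 0\\ C\ln p_1 & \cdots & C\ln p_d & C\ln N\end{bmatrix}$$ (diagonal entries $\ln p_1,\dots,\ln p_d$ in the first $d$ rows, zeros elsewhere in those rows, last row $(C\ln p_1,\dots,C\ln p_d,C\ln N)$). Let $\mathbf{z}=(z_1,\dots,z_{d+1})\in\mathbb{Z}^{d+1}$ with $z_{d+1}<0$, and put $\gamma=|z_{d+1}|$, $$u=\prod_{1\le i\le d,\ z_i>0}p_i^{z_i},\qquad k=\prod_{1\le i\le d,\ z_i<0}p_i^{-z_i}.$$ If $$\|\mathbf{A}_1\mathbf{z}\|_1\leq 2\ln C+2\sigma\ln p_d-\gamma\ln N,$$ then $|u-kN^{\gamma}|\leq p_d^{\sigma}$.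
   Context: $\ln$ denotes the natural logarithm and $\|\cdot\|_1$ the $\ell^1$ norm on $\mathbb{R}^{d+1}$. Empty products equal $1$. *)

theory Defs
  imports "HOL-Analysis.Analysis" "HOL-Computational_Algebra.Primes" "HOL-Library.Infinite_Set"
begin

text \<open>The n-th prime, 1-based: nth_prime 1 = 2, nth_prime 2 = 3, ...\<close>
definition nth_prime :: "nat \<Rightarrow> nat" where
  "nth_prime i = enumerate {q::nat. prime q} (i - 1)"

definition A1 :: "nat \<Rightarrow> real \<Rightarrow> nat \<Rightarrow> nat \<Rightarrow> nat \<Rightarrow> real" where
  "A1 d C N i j =
     (if i \<le> d then (if j = i then ln (real (nth_prime i)) else 0)
      else if j \<le> d then C * ln (real (nth_prime j)) else C * ln (real N))"

definition mat_vec :: "nat \<Rightarrow> (nat \<Rightarrow> nat \<Rightarrow> real) \<Rightarrow> (nat \<Rightarrow> real) \<Rightarrow> nat \<Rightarrow> real" where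
  "mat_vec n M v i = (\<Sum>j=1..n. M i j * v j)"

definition l1norm :: "nat \<Rightarrow> (nat \<Rightarrow> real) \<Rightarrow> real" where
  "l1norm n v = (\<Sum>i=1..n. \<bar>v i\<bar>)"

end

theory Submission
  imports Defs
begin

text \<open>
  Put \<open>U = u\<close>, \<open>V = k N^\<gamma>\<close> and \<open>S = \<sigma> ln p\<^sub>d\<close>. The first \<open>d\<close> rows of
  \<open>A\<^sub>1 z\<close> contribute \<open>ln U + ln k\<close> to the norm and the last row contributes
  \<open>C \<bar>ln U - ln V\<bar>\<close>, so the hypothesis reads \<open>ln U + ln V + C \<bar>ln U - ln V\<bar> \<le> 2 ln C + 2 S\<close>.
  If \<open>V = w U\<close> with \<open>w < 1\<close>, this says \<open>U \<le> C e^S w^((C-1)/2)\<close>, and since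
  \<open>w^b (1 - w) \<le> b^b / (b+1)^(b+1)\<close> for \<open>b > 0\<close> we have \<open>C w^((C-1)/2) (1 - w) \<le> 1\<close>,
  whence \<open>U - V = U (1 - w) \<le> e^S\<close>.
\<close>

lemma ln_pow_times_one_minus_le:
  fixes b w :: real
  assumes b: "b > 0" and w: "0 < w" "w < 1"
  shows "b * ln w + ln (1 - w) \<le> b * ln b - (b + 1) * ln (b + 1)"
proof -
  \<comment> \<open>Add \<open>ln x \<le> x - 1\<close> at \<open>X\<close> (weight \<open>b\<close>) and at \<open>Y\<close>: the linear terms cancel.\<close>
  define X where "X = w * (b + 1) / b"
  define Y where "Y = (1 - w) * (b + 1)"
  have "b * ln X \<le> b * (X - 1)"
    using b w by (intro mult_left_mono ln_le_minus_one) (auto simp: X_def)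
  moreover have "ln Y \<le> Y - 1"
    using w b by (intro ln_le_minus_one) (simp add: Y_def)
  moreover have "b * (X - 1) + (Y - 1) = 0"
    using b by (simp add: X_def Y_def field_simps)
  moreover have "ln X = ln w + ln (b + 1) - ln b" "ln Y = ln (1 - w) + ln (b + 1)"
    using b w by (simp_all add: X_def Y_def ln_mult ln_div)
  ultimately show ?thesis
    by (simp add: algebra_simps)
qed

lemma ln_two_mul_add_one_le:
  fixes b :: real
  assumes b: "b > 0"
  shows "ln (2 * b + 1) + b * ln b \<le> (b + 1) * ln (b + 1)"
proof -
  have "ln ((2 * b + 1) / (b + 1)) \<le> b / (b + 1)"
    using b ln_le_minus_one[of "(2 * b + 1) / (b + 1)"] by (simp add: field_simps)
  moreover have "b * ln (b / (b + 1)) \<le> b * (- 1 / (b + 1))"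
    using b ln_le_minus_one[of "b / (b + 1)"] by (intro mult_left_mono) (simp_all add: field_simps)
  moreover have "b * (- 1 / (b + 1)) + b / (b + 1) = 0"
    using b by (simp add: field_simps)
  ultimately have "ln ((2 * b + 1) / (b + 1)) + b * ln (b / (b + 1)) \<le> 0"
    by linarith
  then show ?thesis
    using b by (simp add: ln_div algebra_simps)
qed

lemma ln_mult_pow_one_minus_le_zero:
  fixes C w :: real
  assumes C: "C > 1" and w: "0 < w" "w < 1"
  shows "ln C + (C - 1) / 2 * ln w + ln (1 - w) \<le> 0"
proof -
  define b where "b = (C - 1) / 2"
  have "b > 0" and C_eq: "2 * b + 1 = C"
    using C by (simp_all add: b_def field_simps)
  then have "ln (2 * b + 1) + b * ln w + ln (1 - w) \<le> 0"
    using ln_pow_times_one_minus_le[OF \<open>b > 0\<close> w] ln_two_mul_add_one_le by fastforce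
  then show ?thesis
    unfolding C_eq unfolding b_def .
qed

lemma diff_le_exp_of_ln_bound:
  fixes U V C S :: real
  assumes "0 < V" "V \<le> U" "C > 1"
    and h: "ln U + ln V + C * \<bar>ln U - ln V\<bar> \<le> 2 * ln C + 2 * S"
  shows "U - V \<le> exp S"
proof (cases "V = U")
  case False
  define w where "w = V / U"
  have w: "0 < w" "w < 1" and V_eq: "V = U * w"
    using assms False by (auto simp: w_def)
  then have "ln V = ln U + ln w" "ln w < 0"
    using assms by (simp_all add: ln_mult)
  with h have "2 * ln U \<le> 2 * ln C + 2 * S + (C - 1) * ln w"
    by (simp add: algebra_simps)
  with ln_mult_pow_one_minus_le_zero[OF \<open>C > 1\<close> w] have "ln (U * (1 - w)) \<le> S"
    using assms w by (simp add: ln_mult)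
  moreover have "U * (1 - w) > 0"
    using assms w by simp
  ultimately have "U * (1 - w) \<le> exp S"
    by (metis exp_le_cancel_iff exp_ln)
  then show ?thesis
    by (simp add: V_eq algebra_simps)
qed simp

lemma abs_diff_le_exp_of_ln_bound:
  fixes U V C S :: real
  assumes "0 < U" "0 < V" "C > 1"
    and "ln U + ln V + C * \<bar>ln U - ln V\<bar> \<le> 2 * ln C + 2 * S"
  shows "\<bar>U - V\<bar> \<le> exp S"
  using diff_le_exp_of_ln_bound[of V U C S] diff_le_exp_of_ln_bound[of U V C S] assms
  by (cases "V \<le> U") (simp_all add: abs_minus_commute add.commute)

lemma prime_nth_prime: "prime (nth_prime i)"
  unfolding nth_prime_def using enumerate_in_set[OF primes_infinite] by blast

lemma ln_prod_power_nat:
  fixes p :: "'a \<Rightarrow> nat" and e :: "'a \<Rightarrow> int"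
  assumes "finite A" "\<And>i. i \<in> A \<Longrightarrow> p i > 0" "\<And>i. i \<in> A \<Longrightarrow> e i \<ge> 0"
  shows "ln (real (\<Prod>i\<in>A. p i ^ nat (e i))) = (\<Sum>i\<in>A. real_of_int (e i) * ln (real (p i)))"
  using assms by (simp add: ln_prod ln_realpow)

lemma sum_ln_mult_int_eq_ln_prods:
  fixes p :: "'a \<Rightarrow> nat" and z :: "'a \<Rightarrow> int"
  assumes I: "finite I" and p: "\<And>i. i \<in> I \<Longrightarrow> p i > 1"
  defines "u \<equiv> real (\<Prod>i\<in>{i\<in>I. z i > 0}. p i ^ nat (z i))"
    and "k \<equiv> real (\<Prod>i\<in>{i\<in>I. z i < 0}. p i ^ nat (- z i))"
  shows "(\<Sum>i\<in>I. ln (real (p i)) * z i) = ln u - ln k"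
    and "(\<Sum>i\<in>I. \<bar>ln (real (p i)) * z i\<bar>) = ln u + ln k"
proof -
  define pos where "pos i = (if z i > 0 then real_of_int (z i) * ln (real (p i)) else 0)" for i
  define neg where "neg i = (if z i < 0 then - (real_of_int (z i) * ln (real (p i))) else 0)" for i
  have "ln u = (\<Sum>i\<in>{i\<in>I. z i > 0}. real_of_int (z i) * ln (real (p i)))"
    unfolding u_def using I p by (intro ln_prod_power_nat) (auto dest!: p)
  also have "\<dots> = (\<Sum>i\<in>I. pos i)"
    using I by (simp add: pos_def sum.inter_filter)
  finally have "ln u = (\<Sum>i\<in>I. pos i)" .
  moreover have "ln k = (\<Sum>i\<in>{i\<in>I. z i < 0}. real_of_int (- z i) * ln (real (p i)))"
    unfolding k_def using I p by (intro ln_prod_power_nat) (auto dest!: p)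
  moreover have "\<dots> = (\<Sum>i\<in>I. neg i)"
    using I by (simp add: neg_def sum.inter_filter)
  moreover have "ln (real (p i)) * z i = pos i - neg i" for i
    by (simp add: pos_def neg_def algebra_simps)
  moreover have "\<bar>ln (real (p i)) * z i\<bar> = pos i + neg i" if "i \<in> I" for i
    using p[OF that] by (auto simp: pos_def neg_def abs_mult)
  ultimately show "(\<Sum>i\<in>I. ln (real (p i)) * z i) = ln u - ln k"
    and "(\<Sum>i\<in>I. \<bar>ln (real (p i)) * z i\<bar>) = ln u + ln k"
    by (simp_all add: sum_subtractf sum.distrib)
qed

lemma mat_vec_A1_upper:
  assumes "1 \<le> i" "i \<le> d"
  shows "mat_vec (d + 1) (A1 d C N) v i = ln (real (nth_prime i)) * v i"
proof -
  have "mat_vec (d + 1) (A1 d C N) v i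
      = (\<Sum>j\<in>{1..d+1}. if j = i then ln (real (nth_prime i)) * v i else 0)"
    unfolding mat_vec_def A1_def using assms by (intro sum.cong) auto
  then show ?thesis
    using assms by simp
qed

lemma mat_vec_A1_last:
  "mat_vec (d + 1) (A1 d C N) v (d + 1)
     = C * ((\<Sum>j=1..d. ln (real (nth_prime j)) * v j) + ln (real N) * v (d + 1))"
  by (simp add: mat_vec_def A1_def sum.cl_ivl_Suc sum_distrib_left algebra_simps)

lemma l1norm_A1_mat_vec:
  "l1norm (d + 1) (mat_vec (d + 1) (A1 d C N) v)
     = (\<Sum>i=1..d. \<bar>ln (real (nth_prime i)) * v i\<bar>)
       + \<bar>C\<bar> * \<bar>(\<Sum>j=1..d. ln (real (nth_prime j)) * v j) + ln (real N) * v (d + 1)\<bar>"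
proof -
  have "(\<Sum>i=1..d. \<bar>mat_vec (d + 1) (A1 d C N) v i\<bar>) = (\<Sum>i=1..d. \<bar>ln (real (nth_prime i)) * v i\<bar>)"
    by (rule sum.cong[OF refl], rule arg_cong[where f = abs], rule mat_vec_A1_upper) auto
  then show ?thesis
    by (simp add: l1norm_def mat_vec_A1_last[simplified] abs_mult)
qed

theorem theorem1:
  fixes d N :: nat and C \<sigma> :: real and z :: "nat \<Rightarrow> int"
  assumes "d \<ge> 1" and "N \<ge> 1" and "C > 1"
    and "z (d+1) < 0"
    and "l1norm (d+1) (mat_vec (d+1) (A1 d C N) (\<lambda>i. real_of_int (z i)))
           \<le> 2 * ln C + 2 * \<sigma> * ln (real (nth_prime d))
             - real (nat \<bar>z (d+1)\<bar>) * ln (real N)"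
  shows "\<bar>real (\<Prod>i\<in>{i\<in>{1..d}. z i > 0}. nth_prime i ^ nat (z i))
          - real (\<Prod>i\<in>{i\<in>{1..d}. z i < 0}. nth_prime i ^ nat (- z i)) * real N ^ nat \<bar>z (d+1)\<bar>\<bar>
         \<le> real (nth_prime d) powr \<sigma>"
proof -
  define U where "U = real (\<Prod>i\<in>{i\<in>{1..d}. z i > 0}. nth_prime i ^ nat (z i))"
  define k where "k = real (\<Prod>i\<in>{i\<in>{1..d}. z i < 0}. nth_prime i ^ nat (- z i))"
  define \<gamma> where "\<gamma> = nat \<bar>z (d+1)\<bar>"
  define V where "V = k * real N ^ \<gamma>"
  have p_gt_1: "nth_prime i > 1" for i
    using prime_nth_prime prime_gt_1_nat by blast
  then have "U > 0" "k > 0"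
    unfolding U_def k_def by (auto intro!: prod_pos simp: prime_gt_0_nat prime_nth_prime)
  then have "V > 0" and ln_V: "ln V = ln k + \<gamma> * ln (real N)"
    using \<open>N \<ge> 1\<close> by (simp_all add: V_def ln_mult ln_realpow)
  have "z (d + 1) = - int \<gamma>"
    using \<open>z (d+1) < 0\<close> by (simp add: \<gamma>_def)
  then have "l1norm (d+1) (mat_vec (d+1) (A1 d C N) (\<lambda>i. real_of_int (z i)))
      = ln U + ln k + C * \<bar>ln U - ln V\<bar>"
    unfolding l1norm_A1_mat_vec
    using sum_ln_mult_int_eq_ln_prods[of "{1..d}" nth_prime z, folded U_def k_def] p_gt_1 ln_V \<open>C > 1\<close>
    by (simp add: algebra_simps)
  then have "ln U + ln V + C * \<bar>ln U - ln V\<bar> \<le> 2 * ln C + 2 * (\<sigma> * ln (real (nth_prime d)))"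
    using assms(5) ln_V by (simp add: \<gamma>_def)
  then have "\<bar>U - V\<bar> \<le> exp (\<sigma> * ln (real (nth_prime d)))"
    using \<open>U > 0\<close> \<open>V > 0\<close> \<open>C > 1\<close> by (intro abs_diff_le_exp_of_ln_bound)
  then show ?thesis
    using p_gt_1[of d] by (simp add: U_def k_def V_def \<gamma>_def powr_def mult.commute)
qed

end
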